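(* Let $T$ be any spanning tree of $G$ and let $\tau=\sum_{(i,j)\in T}\frac{r(i,j)}{R(C(i,j))}$ (which equals the total stretch $\mathrm{st}_T(G,\mathbf r)$ of $T$). Let $\epsilon>0$. After $K=\tau\ln(\frac{\tau}{\epsilon})$ iterations, the algorithm Dual KOSZ (run with the tree $T$) returns $\mathbf{x}^K\in\mathbb{R}^V$ and $\mathbf{f}^K\in\mathbb{R}^{\vec E}$ such that $$\mathbb{E}\|\mathbf{x}^*-\mathbf{x}^K\|_{\mathbf L}^2\le \frac{\epsilon}{\tau}\|\mathbf{x}^*\|_{\mathbf L}^2\quad\text{and}\quad \mathbb{E}[\mathcal{E}(\mathbf f^K)]\le(1+\epsilon)\mathcal{E}(\mathbf f^* ),$$ where $\mathbf f^*$ is the minimum-energy $\mathbf b$-flow and $\mathbf x^*$ is any maximizer of $\mathcal B$.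
   Context: $G=(V,E)$ is a connected undirected graph with $n$ vertices and $m$ edges, resistances $r(e)>0$, and $\vec E$ an arbitrary fixed orientation of $E$; for $(i,j)\in\vec E$ set $f(j,i)=-f(i,j)$. A supply vector $\mathbf b\in\mathbb R^V$ satisfies $\sum_i b(i)=0$. A $\mathbf b$-flow is $\mathbf f\in\mathbb R^{\vec E}$ with $\sum_{j:(i,j)\in\vec E}f(i,j)-\sum_{j:(j,i)\in\vec E}f(j,i)=b(i)$ for all $i$. Energy: $\mathcal E(\mathbf f)=\frac12\sum_{e}r(e)f(e)^2$; $\mathbf f^*$ minimizes $\mathcal E$ over $\mathbf b$-flows. $\mathbf L=\sum_{ij\in E}\frac1{r(i,j)}(\mathbf e_i-\mathbf e_j)(\mathbf e_i-\mathbf e_j)^\top$, $\|\mathbf y\|_{\mathbf L}^2=\mathbf y^\top\mathbf L\mathbf y$, $\mathcal B(\mathbf x)=\mathbf b^\top\mathbf x-\frac12\mathbf x^\top\mathbf L\mathbf x$, and $\mathbf x^*$ maximizes $\mathcal B$ (equivalently $\mathbf L\mathbf x^*=\mathbf b$). Stretch: $\mathrm{st}_T(G,\mathbf r)=\sum_{(i,j)\in\vec E}\frac1{r(i,j)}\sum_{(k,l)\in P(i,j)}r(k,l)$, $P(i,j)$ the tree path. Root $T$ arbitrarily and direct tree edges toward the root; for a tree edge $(i,j)$, $C(i,j)$ is the vertex set of the component of $T-ij$ containing $i$. For $C\subset V$: $\delta(C)$ is the set of edges with exactly one endpoint in $C$, $R(C)=(\sum_{e\in\delta(C)}1/r(e))^{-1}$,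 $b(C)=\sum_{v\in C}b(v)$, and for potentials $\mathbf x$, $f_{\mathbf x}(C)=\sum_{ij\in E,\,i\in C,\,j\notin C}\frac{x(i)-x(j)}{r(i,j)}$. The tree-defined flow $\mathbf f_{T,\mathbf x}$ has $f_{T,\mathbf x}(i,j)=\frac{x(i)-x(j)}{r(i,j)}$ on non-tree edges, and on tree edges the unique values making it a $\mathbf b$-flow. Dual KOSZ: set $\mathbf x^0=0$; in each iteration $t$, sample a tree edge $(i,j)$ with probability $P_{ij}=\frac1\tau\cdot\frac{r(i,j)}{R(C(i,j))}$ independently, let $C=C(i,j)$, $\Delta^t=(b(C)-f_{\mathbf x^t}(C))R(C)$, and set $x^{t+1}(v)=x^t(v)+\Delta^t$ for $v\in C$, $x^{t+1}(v)=x^t(v)$ otherwise. After $K$ iterations output $\mathbf x^K$ and $\mathbf f^K=\mathbf f_{T,\mathbf x^K}$. *)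

theory Defs
  imports Complex_Main
begin

text \<open>Graph: vertex set V, edge set E given by its fixed orientation (pairs (i,j)).
  Undirected reachability uses the symmetric closure.\<close>

definition reach :: "('v \<times> 'v) set \<Rightarrow> 'v \<Rightarrow> 'v \<Rightarrow> bool" where
  "reach F u w \<longleftrightarrow> (u, w) \<in> (F \<union> F\<inverse>)\<^sup>*"

definition connected_on :: "'v set \<Rightarrow> ('v \<times> 'v) set \<Rightarrow> bool" where
  "connected_on V F \<longleftrightarrow> (\<forall>u\<in>V. \<forall>w\<in>V. reach F u w)"

definition spanning_tree :: "'v set \<Rightarrow> ('v \<times> 'v) set \<Rightarrow> ('v \<times> 'v) set \<Rightarrow> bool" where
  "spanning_tree V E T \<longleftrightarrow> T \<subseteq> E \<and> connected_on V T \<and>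
     (\<forall>e\<in>T. \<not> reach (T - {e}) (fst e) (snd e))"

definition component :: "('v \<times> 'v) set \<Rightarrow> 'v \<Rightarrow> 'v set" where
  "component F v = {w. reach F v w}"

text \<open>C(e) for a tree edge e, with T rooted at rho and tree edges directed toward the root:
  the component of T - e not containing the root.\<close>
definition treeC :: "('v \<times> 'v) set \<Rightarrow> 'v \<Rightarrow> ('v \<times> 'v) \<Rightarrow> 'v set" where
  "treeC T rho e = (if rho \<in> component (T - {e}) (fst e)
                    then component (T - {e}) (snd e) else component (T - {e}) (fst e))"

definition cut :: "('v \<times> 'v) set \<Rightarrow> 'v set \<Rightarrow> ('v \<times> 'v) set" where
  "cut E C = {e \<in> E. (fst e \<in> C) \<noteq> (snd e \<in> C)}"

definition Rcut :: "('v \<times> 'v) set \<Rightarrow> ('v \<times> 'v \<Rightarrow> real) \<Rightarrow> 'v set \<Rightarrow> real" where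
  "Rcut E r C = 1 / (\<Sum>e\<in>cut E C. 1 / r e)"

definition bset :: "('v \<Rightarrow> real) \<Rightarrow> 'v set \<Rightarrow> real" where
  "bset b C = (\<Sum>v\<in>C. b v)"

definition cutflow :: "('v \<times> 'v) set \<Rightarrow> ('v \<times> 'v \<Rightarrow> real) \<Rightarrow> ('v \<Rightarrow> real) \<Rightarrow> 'v set \<Rightarrow> real" where
  "cutflow E r x C = (\<Sum>e\<in>cut E C.
      (if fst e \<in> C then x (fst e) - x (snd e) else x (snd e) - x (fst e)) / r e)"

definition tau :: "('v \<times> 'v) set \<Rightarrow> ('v \<times> 'v \<Rightarrow> real) \<Rightarrow> ('v \<times> 'v) set \<Rightarrow> 'v \<Rightarrow> real" where
  "tau E r T rho = (\<Sum>e\<in>T. r e / Rcut E r (treeC T rho e))"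

definition prob_edge :: "('v \<times> 'v) set \<Rightarrow> ('v \<times> 'v \<Rightarrow> real) \<Rightarrow> ('v \<times> 'v) set \<Rightarrow> 'v
    \<Rightarrow> ('v \<times> 'v) \<Rightarrow> real" where
  "prob_edge E r T rho e = (1 / tau E r T rho) * (r e / Rcut E r (treeC T rho e))"

definition dkosz_step :: "('v \<times> 'v) set \<Rightarrow> ('v \<times> 'v \<Rightarrow> real) \<Rightarrow> ('v \<Rightarrow> real) \<Rightarrow> ('v \<times> 'v) set
    \<Rightarrow> 'v \<Rightarrow> ('v \<Rightarrow> real) \<Rightarrow> ('v \<times> 'v) \<Rightarrow> ('v \<Rightarrow> real)" where
  "dkosz_step E r b T rho x e =
     (let C = treeC T rho e;
          \<Delta> = (bset b C - cutflow E r x C) * Rcut E r C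
      in (\<lambda>v. if v \<in> C then x v + \<Delta> else x v))"

text \<open>Expectation of g(x^k) when k iterations of Dual KOSZ are run from x, each
  iteration sampling a tree edge independently with probability prob_edge.\<close>
primrec dkosz_expect :: "('v \<times> 'v) set \<Rightarrow> ('v \<times> 'v \<Rightarrow> real) \<Rightarrow> ('v \<Rightarrow> real) \<Rightarrow> ('v \<times> 'v) set
    \<Rightarrow> 'v \<Rightarrow> nat \<Rightarrow> (('v \<Rightarrow> real) \<Rightarrow> real) \<Rightarrow> ('v \<Rightarrow> real) \<Rightarrow> real" where
  "dkosz_expect E r b T rho 0 g x = g x"
| "dkosz_expect E r b T rho (Suc k) g x =
     (\<Sum>e\<in>T. prob_edge E r T rho e * dkosz_expect E r b T rho k g (dkosz_step E r b T rho x e))"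

text \<open>Flows are functions on oriented edges (values off E are irrelevant except in tree_flow,
  where they are normalised to 0).\<close>
definition net_out :: "('v \<times> 'v) set \<Rightarrow> ('v \<times> 'v \<Rightarrow> real) \<Rightarrow> 'v \<Rightarrow> real" where
  "net_out E f v = (\<Sum>e\<in>{e\<in>E. fst e = v}. f e) - (\<Sum>e\<in>{e\<in>E. snd e = v}. f e)"

definition is_bflow :: "'v set \<Rightarrow> ('v \<times> 'v) set \<Rightarrow> ('v \<Rightarrow> real) \<Rightarrow> ('v \<times> 'v \<Rightarrow> real) \<Rightarrow> bool" where
  "is_bflow V E b f \<longleftrightarrow> (\<forall>v\<in>V. net_out E f v = b v)"

definition energy :: "('v \<times> 'v) set \<Rightarrow> ('v \<times> 'v \<Rightarrow> real) \<Rightarrow> ('v \<times> 'v \<Rightarrow> real) \<Rightarrow> real" where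
  "energy E r f = (1/2) * (\<Sum>e\<in>E. r e * (f e)\<^sup>2)"

definition Lnorm2 :: "('v \<times> 'v) set \<Rightarrow> ('v \<times> 'v \<Rightarrow> real) \<Rightarrow> ('v \<Rightarrow> real) \<Rightarrow> real" where
  "Lnorm2 E r y = (\<Sum>e\<in>E. (1 / r e) * (y (fst e) - y (snd e))\<^sup>2)"

definition Bfun :: "'v set \<Rightarrow> ('v \<times> 'v) set \<Rightarrow> ('v \<times> 'v \<Rightarrow> real) \<Rightarrow> ('v \<Rightarrow> real) \<Rightarrow> ('v \<Rightarrow> real) \<Rightarrow> real" where
  "Bfun V E r b x = (\<Sum>v\<in>V. b v * x v) - (1/2) * Lnorm2 E r x"

definition tree_flow :: "'v set \<Rightarrow> ('v \<times> 'v) set \<Rightarrow> ('v \<times> 'v \<Rightarrow> real) \<Rightarrow> ('v \<Rightarrow> real)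
    \<Rightarrow> ('v \<times> 'v) set \<Rightarrow> ('v \<Rightarrow> real) \<Rightarrow> ('v \<times> 'v \<Rightarrow> real)" where
  "tree_flow V E r b T x = (THE f. (\<forall>e. e \<notin> E \<longrightarrow> f e = 0) \<and>
      (\<forall>e\<in>E - T. f e = (x (fst e) - x (snd e)) / r e) \<and> is_bflow V E b f)"

end

theory Submission
  imports Defs
begin

(* Dual KOSZ is randomized exact coordinate ascent on the concave dual objective B, the
   coordinates being the indicators of the fundamental cuts C(e) of T.  The update on C(e)
   maximises B along that direction and raises it by (b(C) - f_x(C))^2 R(C) / 2.  Only the
   tree edge e crosses C(e), and f_{T,x} agrees with the potential flow off T, so
   b(C) - f_x(C) = +-(f_{T,x}(e) - (x(i) - x(j))/r(e)).  With P_e proportional to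
   r(e)/R(C(e)) the expected gain is therefore exactly the duality gap E(f_{T,x}) - B(x)
   divided by tau.  By weak duality the gap to the optimum, B(x_opt) - B(x), contracts in
   expectation by the factor 1 - 1/tau per iteration, and optimality of x_opt gives
   B(x_opt) - B(x) = ||x_opt - x||_L^2 / 2, which yields the first bound.  The same gap
   identity gives E(f_{T,x}) <= B(x_opt) + (tau - 1)(B(x_opt) - B(x)), which yields the
   second. *)

lemma reach_refl [simp]: "reach F a a"
  by (simp add: reach_def)

lemma reach_sym: "reach F a b \<Longrightarrow> reach F b a"
  unfolding reach_def by (meson sym_Un_converse sym_rtrancl symD)

lemma reach_trans: "reach F a b \<Longrightarrow> reach F b c \<Longrightarrow> reach F a c"
  unfolding reach_def by simp

lemma reach_edge: "(a, b) \<in> F \<Longrightarrow> reach F a b"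
  unfolding reach_def by auto

lemma reach_mono: "F \<subseteq> G \<Longrightarrow> reach F a b \<Longrightarrow> reach G a b"
  unfolding reach_def by (meson Un_mono converse_mono rtrancl_mono subsetD)

lemma reach_empty [simp]: "reach {} a b \<longleftrightarrow> a = b"
  unfolding reach_def by simp

lemma reach_closed:
  assumes "F \<subseteq> V \<times> V" "a \<in> V" "reach F a b"
  shows "b \<in> V"
  using assms(3) unfolding reach_def by (induction rule: rtrancl_induct) (use assms(1,2) in auto)

lemma reach_same_component: "reach F a b \<Longrightarrow> reach F a z \<longleftrightarrow> reach F b z"
  by (meson reach_sym reach_trans)

lemma reach_insert_iff:
  "reach (insert (u, w) F) a z \<longleftrightarrow>
     reach F a z \<or> (reach F a u \<and> reach F w z) \<or> (reach F a w \<and> reach F u z)"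
  (is "?lhs \<longleftrightarrow> ?rhs")
proof
  assume ?lhs
  then have "(a, z) \<in> (insert (u, w) F \<union> (insert (u, w) F)\<inverse>)\<^sup>*"
    unfolding reach_def .
  then show ?rhs
  proof (induction rule: rtrancl_induct)
    case (step y z)
    then consider "reach F y z" | "y = u" "z = w" | "y = w" "z = u"
      unfolding reach_def by auto
    then show ?case
      using step.IH by cases (blast intro: reach_trans reach_refl)+
  qed simp
next
  have "reach F x y \<Longrightarrow> reach (insert (u, w) F) x y" for x y
    by (rule reach_mono[of F]) auto
  moreover have "reach (insert (u, w) F) u w" "reach (insert (u, w) F) w u"
    by (auto intro: reach_edge reach_sym)
  ultimately show "?rhs \<Longrightarrow> ?lhs"
    by (blast intro: reach_trans)
qed

lemma net_out_cong: "(\<And>e. e \<in> F \<Longrightarrow> f e = g e) \<Longrightarrow> net_out F f v = net_out F g v"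
  unfolding net_out_def by (metis (mono_tags, lifting) mem_Collect_eq sum.cong)

lemma net_out_diff: "net_out F (\<lambda>e. f e - g e) v = net_out F f v - net_out F g v"
  unfolding net_out_def by (simp add: sum_subtractf)

lemma net_out_insert:
  assumes "finite F" "e \<notin> F"
  shows "net_out (insert e F) f v =
           net_out F f v + (if fst e = v then f e else 0) - (if snd e = v then f e else 0)"
proof -
  have "{x \<in> insert e F. fst x = v} = (if fst e = v then insert e {x \<in> F. fst x = v} else {x \<in> F. fst x = v})"
       "{x \<in> insert e F. snd x = v} = (if snd e = v then insert e {x \<in> F. snd x = v} else {x \<in> F. snd x = v})"
    by auto
  then show ?thesis
    unfolding net_out_def using assms by auto
qed

lemma net_out_insert_fun_upd:
  assumes "finite F" "(u, w) \<notin> F"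
  shows "net_out (insert (u, w) F) (g((u, w) := S)) v =
           net_out F g v + (if u = v then S else 0) - (if w = v then S else 0)"
proof -
  have "net_out F (g((u, w) := S)) v = net_out F g v"
    by (rule net_out_cong) (use assms(2) in auto)
  then show ?thesis
    using net_out_insert[OF assms, of "g((u, w) := S)" v] by simp
qed

lemma net_out_subset_diff:
  assumes "finite E" "T \<subseteq> E"
  shows "net_out E f v = net_out T f v + net_out (E - T) f v"
proof -
  have "(\<Sum>e\<in>{e\<in>E. p e = v}. f e) = (\<Sum>e\<in>{e\<in>T. p e = v}. f e) + (\<Sum>e\<in>{e\<in>E - T. p e = v}. f e)"
    for p :: "'a \<times> 'a \<Rightarrow> 'a"
  proof -
    have "{e\<in>E. p e = v} = {e\<in>T. p e = v} \<union> {e\<in>E - T. p e = v}"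
      using assms(2) by auto
    then show ?thesis
      using assms by (simp add: sum.union_disjoint finite_subset Int_def)
  qed
  then show ?thesis
    unfolding net_out_def by simp
qed

lemma sum_fibres:
  assumes "finite E" "finite C"
  shows "(\<Sum>v\<in>C. \<Sum>e\<in>{e\<in>E. p e = v}. f e) = (\<Sum>e\<in>{e\<in>E. p e \<in> C}. f e)"
proof -
  have "(\<Sum>v\<in>C. \<Sum>e\<in>{e\<in>{e\<in>E. p e \<in> C}. p e = v}. f e) = (\<Sum>e\<in>{e\<in>E. p e \<in> C}. f e)"
    by (rule sum.group) (use assms in auto)
  moreover have "{e\<in>{e\<in>E. p e \<in> C}. p e = v} = {e\<in>E. p e = v}" if "v \<in> C" for v
    using that by auto
  ultimately show ?thesis
    by simp
qed

lemma sum_cut: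
  assumes "finite E"
  shows "(\<Sum>e\<in>cut E C. g e) = (\<Sum>e\<in>E. if (fst e \<in> C) \<noteq> (snd e \<in> C) then g e else 0)"
  unfolding cut_def by (rule sum.inter_filter[OF assms])

lemma sum_net_out_eq_cut:
  assumes "finite E" "finite C"
  shows "(\<Sum>v\<in>C. net_out E f v) = (\<Sum>e\<in>cut E C. if fst e \<in> C then f e else - f e)"
proof -
  have "(\<Sum>v\<in>C. net_out E f v) = (\<Sum>e\<in>{e\<in>E. fst e \<in> C}. f e) - (\<Sum>e\<in>{e\<in>E. snd e \<in> C}. f e)"
    unfolding net_out_def sum_subtractf sum_fibres[OF assms] ..
  also have "\<dots> = (\<Sum>e\<in>E. (if fst e \<in> C then f e else 0) - (if snd e \<in> C then f e else 0))"
    using assms by (simp add: sum.inter_filter sum_subtractf)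
  also have "\<dots> = (\<Sum>e\<in>E. if (fst e \<in> C) \<noteq> (snd e \<in> C) then (if fst e \<in> C then f e else - f e) else 0)"
    by (rule sum.cong) auto
  also have "\<dots> = (\<Sum>e\<in>cut E C. if fst e \<in> C then f e else - f e)"
    by (rule sum_cut[OF assms(1), symmetric])
  finally show ?thesis .
qed

lemma sum_net_out_eq_0:
  assumes "finite F" "finite V" "F \<subseteq> V \<times> V"
  shows "(\<Sum>v\<in>V. net_out F f v) = 0"
proof -
  have "cut F V = {}"
    using assms(3) unfolding cut_def by auto
  then show ?thesis
    using sum_net_out_eq_cut[OF assms(1,2), of f] by simp
qed

lemma sum_mult_net_out:
  assumes "finite E" "finite V" "E \<subseteq> V \<times> V"
  shows "(\<Sum>v\<in>V. x v * net_out E f v) = (\<Sum>e\<in>E. f e * (x (fst e) - x (snd e)))"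
proof -
  have "(\<Sum>v\<in>V. x v * (\<Sum>e\<in>{e\<in>E. p e = v}. f e)) = (\<Sum>e\<in>E. x (p e) * f e)"
    if "p ` E \<subseteq> V" for p
  proof -
    have "(\<Sum>v\<in>V. x v * (\<Sum>e\<in>{e\<in>E. p e = v}. f e)) = (\<Sum>v\<in>V. \<Sum>e\<in>{e\<in>E. p e = v}. x (p e) * f e)"
      by (auto simp: sum_distrib_left intro!: sum.cong)
    also have "\<dots> = (\<Sum>e\<in>{e\<in>E. p e \<in> V}. x (p e) * f e)"
      by (rule sum_fibres[OF assms(1,2)])
    also have "{e\<in>E. p e \<in> V} = E"
      using that by auto
    finally show ?thesis .
  qed
  moreover have "fst ` E \<subseteq> V" "snd ` E \<subseteq> V"
    using assms(3) by auto
  ultimately show ?thesis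
    unfolding net_out_def right_diff_distrib sum_subtractf by (simp add: algebra_simps)
qed

(* If the new edge (u, w) joins two components of F, let it carry the total demand S of the
   component of u; what remains is a balanced demand for F alone. *)
lemma demand_shift_across_edge:
  fixes c :: "'v \<Rightarrow> real"
  assumes "finite V" "u \<in> V" "w \<in> V" "\<not> reach F u w"
    and balanced: "\<forall>v\<in>V. (\<Sum>z\<in>{z\<in>V. reach (insert (u, w) F) v z}. c z) = 0"
  defines "S \<equiv> \<Sum>z\<in>{z\<in>V. reach F u z}. c z"
  shows "\<forall>v\<in>V. (\<Sum>z\<in>{z\<in>V. reach F v z}. c z - (if z = u then S else 0) + (if z = w then S else 0)) = 0"
proof
  fix v assume "v \<in> V"
  let ?K = "\<lambda>a. {z\<in>V. reach F a z}"
  have shifted: "(\<Sum>z\<in>?K v. c z - (if z = u then S else 0) + (if z = w then S else 0))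
      = (\<Sum>z\<in>?K v. c z) - (if u \<in> ?K v then S else 0) + (if w \<in> ?K v then S else 0)"
    using assms(1) by (simp add: sum.distrib sum_subtractf sum.delta)
  consider "reach F v u" | "reach F v w" | "\<not> reach F v u" "\<not> reach F v w"
    by blast
  then show "(\<Sum>z\<in>?K v. c z - (if z = u then S else 0) + (if z = w then S else 0)) = 0"
  proof cases
    case 1
    then have "(\<Sum>z\<in>?K v. c z) = S" "u \<in> ?K v" "w \<notin> ?K v"
      using reach_same_component[OF 1] assms(4) reach_trans \<open>u \<in> V\<close> unfolding S_def by auto
    then show ?thesis
      unfolding shifted by auto
  next
    case 2
    then have Kv: "?K v = ?K w" "u \<notin> ?K v"
      using reach_same_component[OF 2] assms(4) reach_sym[of F w u] by auto
    have merged: "{z\<in>V. reach (insert (u, w) F) w z} = ?K w \<union> ?K u"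
      and disjoint: "?K w \<inter> ?K u = {}"
      using assms(4) by (auto simp: reach_insert_iff dest: reach_sym intro: reach_trans)
    have "(\<Sum>z\<in>?K w. c z) + S = (\<Sum>z\<in>?K w \<union> ?K u. c z)"
      unfolding S_def by (rule sum.union_disjoint[symmetric]) (use assms(1) disjoint in auto)
    also have "\<dots> = 0"
      using balanced \<open>w \<in> V\<close> unfolding merged[symmetric] by blast
    finally have "(\<Sum>z\<in>?K w. c z) + S = 0" .
    then show ?thesis
      unfolding shifted using Kv \<open>w \<in> V\<close> by auto
  next
    case 3
    then have "{z\<in>V. reach (insert (u, w) F) v z} = ?K v"
      by (auto simp: reach_insert_iff)
    then have "(\<Sum>z\<in>?K v. c z) = 0"
      using balanced \<open>v \<in> V\<close> by metis
    then show ?thesis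
      unfolding shifted using 3 by auto
  qed
qed

lemma exists_net_out_eq:
  fixes c :: "'v \<Rightarrow> real"
  assumes "finite F" "F \<subseteq> V \<times> V" "finite V"
    and "\<forall>v\<in>V. (\<Sum>z\<in>{z\<in>V. reach F v z}. c z) = 0"
  shows "\<exists>f. \<forall>v\<in>V. net_out F f v = c v"
  using assms
proof (induction F arbitrary: c rule: finite_induct)
  case empty
  have "c v = 0" if "v \<in> V" for v
  proof -
    have "{z\<in>V. reach {} v z} = {v}"
      using that by auto
    then show ?thesis
      using empty.prems(3) that by fastforce
  qed
  then show ?case
    by (intro exI[of _ "\<lambda>_. 0"]) (simp add: net_out_def)
next
  case (insert e F)
  obtain u w where e: "e = (u, w)"
    by (cases e)
  have "u \<in> V" "w \<in> V" "F \<subseteq> V \<times> V"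
    using insert.prems(1) e by auto
  have extend: "\<exists>f. \<forall>v\<in>V. net_out (insert e F) f v = c v"
    if "\<forall>v\<in>V. net_out F g v = c v - (if v = u then S else 0) + (if v = w then S else 0)" for g S
    using that net_out_insert_fun_upd[OF insert.hyps[unfolded e], of g S] unfolding e
    by (intro exI[of _ "g((u, w) := S)"]) (auto simp: eq_commute[of u] eq_commute[of w])
  show ?case
  proof (cases "reach F u w")
    case True
    then have "reach (insert (u, w) F) v z \<longleftrightarrow> reach F v z" for v z
      by (meson reach_insert_iff reach_sym reach_trans)
    then have "\<forall>v\<in>V. (\<Sum>z\<in>{z\<in>V. reach F v z}. c z) = 0"
      using insert.prems(3) e by simp
    then obtain g where "\<forall>v\<in>V. net_out F g v = c v"
      using insert.IH[OF \<open>F \<subseteq> V \<times> V\<close> insert.prems(2)] by blast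
    then show ?thesis
      using extend[of g 0] by simp
  next
    case False
    define S where "S = (\<Sum>z\<in>{z\<in>V. reach F u z}. c z)"
    have "\<forall>v\<in>V. (\<Sum>z\<in>{z\<in>V. reach F v z}. c z - (if z = u then S else 0) + (if z = w then S else 0)) = 0"
      unfolding S_def using insert.prems e False \<open>u \<in> V\<close> \<open>w \<in> V\<close> by (intro demand_shift_across_edge) auto
    then obtain g where "\<forall>v\<in>V. net_out F g v = c v - (if v = u then S else 0) + (if v = w then S else 0)"
      using insert.IH[OF \<open>F \<subseteq> V \<times> V\<close> insert.prems(2)] by blast
    then show ?thesis
      by (rule extend)
  qed
qed

definition potential_flow :: "('v \<times> 'v \<Rightarrow> real) \<Rightarrow> ('v \<Rightarrow> real) \<Rightarrow> 'v \<times> 'v \<Rightarrow> real" where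
  "potential_flow r x e = (x (fst e) - x (snd e)) / r e"

definition Linner :: "('v \<times> 'v) set \<Rightarrow> ('v \<times> 'v \<Rightarrow> real) \<Rightarrow> ('v \<Rightarrow> real) \<Rightarrow> ('v \<Rightarrow> real) \<Rightarrow> real" where
  "Linner E r x y = (\<Sum>e\<in>E. (1 / r e) * (x (fst e) - x (snd e)) * (y (fst e) - y (snd e)))"

lemma Bfun_zero: "Bfun V E r b (\<lambda>v. 0) = 0"
  unfolding Bfun_def Lnorm2_def by simp

lemma Bfun_add:
  "Bfun V E r b (\<lambda>v. x v + y v)
     = Bfun V E r b x + ((\<Sum>v\<in>V. b v * y v) - Linner E r x y) - (1/2) * Lnorm2 E r y"
proof -
  have "(1 / r e) * ((x (fst e) + y (fst e)) - (x (snd e) + y (snd e)))\<^sup>2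
      = (1 / r e) * (x (fst e) - x (snd e))\<^sup>2
        + 2 * ((1 / r e) * (x (fst e) - x (snd e)) * (y (fst e) - y (snd e)))
        + (1 / r e) * (y (fst e) - y (snd e))\<^sup>2" for e
    by (simp add: power2_eq_square algebra_simps)
  then have "Lnorm2 E r (\<lambda>v. x v + y v) = Lnorm2 E r x + 2 * Linner E r x y + Lnorm2 E r y"
    unfolding Lnorm2_def Linner_def by (simp add: sum.distrib sum_distrib_left)
  then show ?thesis
    unfolding Bfun_def by (simp add: algebra_simps sum.distrib)
qed

lemma quadratic_nonpos_imp_linear_zero:
  fixes l Q :: real
  assumes "Q \<ge> 0" "\<And>t. t * l - t\<^sup>2 * Q / 2 \<le> 0"
  shows "l = 0"
proof (rule ccontr)
  assume "l \<noteq> 0"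
  define s where "s = 1 / (Q + 1)"
  have "s > 0" "s * Q < 1"
    unfolding s_def using assms(1) by (simp_all add: field_simps)
  have "(s * l) * l - (s * l)\<^sup>2 * Q / 2 = s * l\<^sup>2 * (1 - s * Q / 2)"
    by (simp add: power2_eq_square algebra_simps)
  also have "\<dots> > 0"
    using \<open>l \<noteq> 0\<close> \<open>s > 0\<close> \<open>s * Q < 1\<close> by simp
  finally show False
    using assms(2)[of "s * l"] by linarith
qed

locale network =
  fixes V :: "'v set" and E :: "('v \<times> 'v) set" and r :: "'v \<times> 'v \<Rightarrow> real"
  assumes finite_V: "finite V"
    and E_subset: "E \<subseteq> V \<times> V"
    and r_pos: "\<forall>e\<in>E. r e > 0"
begin

lemma finite_E: "finite E"
  using finite_subset[OF E_subset] finite_V by blast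

lemma Lnorm2_nonneg: "Lnorm2 E r y \<ge> 0"
  unfolding Lnorm2_def using r_pos by (intro sum_nonneg) (simp add: less_imp_le)

lemma energy_minus_Bfun:
  assumes "is_bflow V E b f"
  shows "energy E r f - Bfun V E r b x = (1/2) * (\<Sum>e\<in>E. r e * (f e - potential_flow r x e)\<^sup>2)"
proof -
  have "(\<Sum>v\<in>V. b v * x v) = (\<Sum>v\<in>V. x v * net_out E f v)"
    using assms unfolding is_bflow_def by (auto intro!: sum.cong)
  also have "\<dots> = (\<Sum>e\<in>E. f e * (x (fst e) - x (snd e)))"
    by (rule sum_mult_net_out[OF finite_E finite_V E_subset])
  finally have bx: "(\<Sum>v\<in>V. b v * x v) = (\<Sum>e\<in>E. f e * (x (fst e) - x (snd e)))" .
  have pointwise: "(1/2) * (r e * (f e)\<^sup>2) - f e * (x (fst e) - x (snd e)) + (1/2) * ((1 / r e) * (x (fst e) - x (snd e))\<^sup>2)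
      = (1/2) * (r e * (f e - potential_flow r x e)\<^sup>2)" if "e \<in> E" for e
  proof -
    have "r e > 0"
      using r_pos that by blast
    then show ?thesis
      unfolding potential_flow_def by (simp add: field_simps power2_eq_square)
  qed
  have "energy E r f - Bfun V E r b x = (\<Sum>e\<in>E. (1/2) * (r e * (f e)\<^sup>2) - f e * (x (fst e) - x (snd e))
      + (1/2) * ((1 / r e) * (x (fst e) - x (snd e))\<^sup>2))"
    unfolding energy_def Bfun_def Lnorm2_def bx by (simp add: sum.distrib sum_subtractf sum_distrib_left)
  also have "\<dots> = (\<Sum>e\<in>E. (1/2) * (r e * (f e - potential_flow r x e)\<^sup>2))"
    using pointwise by (rule sum.cong[OF refl])
  finally show ?thesis
    by (simp add: sum_distrib_left)
qed

lemma Bfun_le_energy: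
  assumes "is_bflow V E b f"
  shows "Bfun V E r b x \<le> energy E r f"
proof -
  have "0 \<le> (\<Sum>e\<in>E. r e * (f e - potential_flow r x e)\<^sup>2)"
    using r_pos by (intro sum_nonneg) (simp add: less_imp_le)
  then show ?thesis
    using energy_minus_Bfun[OF assms, of x] by simp
qed

lemma Bfun_shift:
  assumes "C \<subseteq> V"
  shows "Bfun V E r b (\<lambda>v. x v + (if v \<in> C then \<alpha> else 0))
           = Bfun V E r b x + \<alpha> * (bset b C - cutflow E r x C) - (1/2) * \<alpha>\<^sup>2 * (\<Sum>e\<in>cut E C. 1 / r e)"
proof -
  let ?y = "\<lambda>v. if v \<in> C then \<alpha> else 0"
  have "(\<Sum>v\<in>V. b v * ?y v) = \<alpha> * bset b C"
    unfolding bset_def sum_distrib_left using finite_V assms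
    by (simp add: if_distrib sum.If_cases Int_absorb1 mult.commute)
  moreover have "Linner E r x ?y = \<alpha> * cutflow E r x C"
    unfolding Linner_def cutflow_def sum_cut[OF finite_E] sum_distrib_left
    by (rule sum.cong) (auto simp: algebra_simps diff_divide_distrib)
  moreover have "Lnorm2 E r ?y = \<alpha>\<^sup>2 * (\<Sum>e\<in>cut E C. 1 / r e)"
    unfolding Lnorm2_def sum_cut[OF finite_E] sum_distrib_left
    by (rule sum.cong) auto
  ultimately show ?thesis
    using Bfun_add[of V E r b x ?y] by (simp add: algebra_simps)
qed

(* At a maximiser the linear part of B along every direction vanishes (that is, L xs = b),
   so B is exactly quadratic around xs. *)
lemma Bfun_eq_max_minus_Lnorm2:
  assumes max: "\<forall>y. Bfun V E r b y \<le> Bfun V E r b xs"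
  shows "Bfun V E r b x = Bfun V E r b xs - (1/2) * Lnorm2 E r (\<lambda>v. xs v - x v)"
proof -
  define d where "d v = x v - xs v" for v
  define l where "l = (\<Sum>v\<in>V. b v * d v) - Linner E r xs d"
  have "(\<Sum>v\<in>V. b v * (t * d v)) = t * (\<Sum>v\<in>V. b v * d v)"
    and "Linner E r xs (\<lambda>v. t * d v) = t * Linner E r xs d"
    and "Lnorm2 E r (\<lambda>v. t * d v) = t\<^sup>2 * Lnorm2 E r d" for t
    unfolding Linner_def Lnorm2_def sum_distrib_left
    by (auto intro!: sum.cong simp: power2_eq_square algebra_simps)
  then have line: "Bfun V E r b (\<lambda>v. xs v + t * d v) = Bfun V E r b xs + t * l - t\<^sup>2 * Lnorm2 E r d / 2" for t
    unfolding Bfun_add l_def by (simp add: algebra_simps)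
  have "t * l - t\<^sup>2 * Lnorm2 E r d / 2 \<le> 0" for t
    using max[rule_format, of "\<lambda>v. xs v + t * d v"] unfolding line by simp
  then have "l = 0"
    using Lnorm2_nonneg by (rule quadratic_nonpos_imp_linear_zero[rotated])
  moreover have "Lnorm2 E r d = Lnorm2 E r (\<lambda>v. xs v - x v)"
    unfolding Lnorm2_def d_def by (rule sum.cong) (auto simp: power2_eq_square algebra_simps)
  ultimately show ?thesis
    using line[of 1] unfolding d_def by simp
qed

lemma Bfun_max_eq: "\<forall>y. Bfun V E r b y \<le> Bfun V E r b xs \<Longrightarrow> Bfun V E r b xs = (1/2) * Lnorm2 E r xs"
  using Bfun_eq_max_minus_Lnorm2[where x = "\<lambda>v. 0"] by (simp add: Bfun_zero)

end

locale tree_network = network V E r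
  for V :: "'v set" and E :: "('v \<times> 'v) set" and r :: "'v \<times> 'v \<Rightarrow> real" +
  fixes b :: "'v \<Rightarrow> real" and T :: "('v \<times> 'v) set" and rho :: 'v
  assumes b_sum: "(\<Sum>v\<in>V. b v) = 0"
    and spanning: "spanning_tree V E T"
begin

lemma T_subset: "T \<subseteq> E"
  using spanning unfolding spanning_tree_def by blast

lemma finite_T: "finite T"
  using finite_subset[OF T_subset finite_E] .

lemma reach_T: "u \<in> V \<Longrightarrow> w \<in> V \<Longrightarrow> reach T u w"
  using spanning unfolding spanning_tree_def connected_on_def by blast

lemma tree_edge_bridge: "e \<in> T \<Longrightarrow> \<not> reach (T - {e}) (fst e) (snd e)"
  using spanning unfolding spanning_tree_def by blast

lemma tree_empty_imp_loop: "T = {} \<Longrightarrow> e \<in> E \<Longrightarrow> fst e = snd e"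
  using reach_T E_subset by fastforce

lemma treeC_cases:
  "treeC T rho e = component (T - {e}) (fst e) \<or> treeC T rho e = component (T - {e}) (snd e)"
  unfolding treeC_def by auto

lemma treeC_subset:
  assumes "e \<in> T"
  shows "treeC T rho e \<subseteq> V"
proof -
  have "component (T - {e}) a \<subseteq> V" if "a \<in> V" for a
    using reach_closed[of "T - {e}" V a] that T_subset E_subset unfolding component_def by blast
  moreover have "fst e \<in> V" "snd e \<in> V"
    using assms T_subset E_subset by auto
  ultimately show ?thesis
    using treeC_cases[of e] by metis
qed

lemma finite_treeC: "e \<in> T \<Longrightarrow> finite (treeC T rho e)"
  using treeC_subset finite_subset finite_V by blast

lemma treeC_separates:
  assumes "e \<in> T"
  shows "(fst e \<in> treeC T rho e) \<noteq> (snd e \<in> treeC T rho e)"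
proof -
  have "\<not> reach (T - {e}) (fst e) (snd e)" "\<not> reach (T - {e}) (snd e) (fst e)"
    using tree_edge_bridge[OF assms] reach_sym[of "T - {e}" "snd e" "fst e"] by auto
  then have "fst e \<in> component (T - {e}) (fst e)" "snd e \<notin> component (T - {e}) (fst e)"
    "snd e \<in> component (T - {e}) (snd e)" "fst e \<notin> component (T - {e}) (snd e)"
    unfolding component_def by simp_all
  with treeC_cases[of e] show ?thesis
    by metis
qed

lemma treeC_not_separates:
  assumes "e' \<in> T" "e' \<noteq> e"
  shows "(fst e' \<in> treeC T rho e) \<longleftrightarrow> (snd e' \<in> treeC T rho e)"
proof -
  have edge: "reach (T - {e}) (fst e') (snd e')"
    using assms by (intro reach_edge) auto
  have "reach (T - {e}) a (fst e') \<longleftrightarrow> reach (T - {e}) a (snd e')" for a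
    using reach_trans[OF _ edge, of a] reach_trans[OF _ reach_sym[OF edge], of a] by blast
  moreover obtain a where "treeC T rho e = component (T - {e}) a"
    using treeC_cases[of e] by blast
  ultimately show ?thesis
    unfolding component_def by simp
qed

lemma cut_treeC_Int_T: "e \<in> T \<Longrightarrow> cut E (treeC T rho e) \<inter> T = {e}"
  using treeC_separates treeC_not_separates T_subset unfolding cut_def by blast

lemma sum_cut_treeC:
  assumes "e \<in> T" "\<And>e'. e' \<in> E - T \<Longrightarrow> h e' = 0"
  shows "(\<Sum>e'\<in>cut E (treeC T rho e). h e') = h e"
proof -
  have "(\<Sum>e'\<in>cut E (treeC T rho e). h e') = (\<Sum>e'\<in>cut E (treeC T rho e) \<inter> T. h e')"
    using assms(2) finite_E by (intro sum.mono_neutral_right) (auto simp: cut_def)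
  then show ?thesis
    using cut_treeC_Int_T[OF assms(1)] by simp
qed

lemma circulation_vanishes_on_tree:
  assumes "\<forall>v\<in>V. net_out E h v = 0" "\<forall>e'\<in>E - T. h e' = 0" "e \<in> T"
  shows "h e = 0"
proof -
  let ?C = "treeC T rho e"
  have "(\<Sum>v\<in>?C. net_out E h v) = 0"
    using assms(1) treeC_subset[OF assms(3)] by (auto intro!: sum.neutral)
  moreover have "(\<Sum>v\<in>?C. net_out E h v) = (if fst e \<in> ?C then h e else - h e)"
    unfolding sum_net_out_eq_cut[OF finite_E finite_treeC[OF assms(3)]]
    using assms(2,3) by (intro sum_cut_treeC) auto
  ultimately show ?thesis
    by (auto split: if_splits)
qed

(* Spelled out as the predicate under THE in tree_flow_def, so that theI' applies. *)
definition is_tree_flow :: "('v \<Rightarrow> real) \<Rightarrow> ('v \<times> 'v \<Rightarrow> real) \<Rightarrow> bool" where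
  "is_tree_flow x f \<longleftrightarrow> (\<forall>e. e \<notin> E \<longrightarrow> f e = 0) \<and>
     (\<forall>e\<in>E - T. f e = (x (fst e) - x (snd e)) / r e) \<and> is_bflow V E b f"

lemma ex_tree_flow: "\<exists>f. is_tree_flow x f"
proof -
  define c where "c v = b v - net_out (E - T) (potential_flow r x) v" for v
  have "(\<Sum>v\<in>V. c v) = 0"
    unfolding c_def sum_subtractf b_sum
    using sum_net_out_eq_0[OF _ finite_V, of "E - T"] finite_E E_subset by auto
  moreover have "{w\<in>V. reach T v w} = V" if "v \<in> V" for v
    using reach_T that by blast
  ultimately obtain g where g: "\<forall>v\<in>V. net_out T g v = c v"
    using exists_net_out_eq[OF finite_T _ finite_V] T_subset E_subset by force
  define f where "f e = (if e \<in> T then g e else if e \<in> E then potential_flow r x e else 0)" for e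
  have "net_out E f v = b v" if "v \<in> V" for v
  proof -
    have "net_out E f v = net_out T f v + net_out (E - T) f v"
      by (rule net_out_subset_diff[OF finite_E T_subset])
    also have "\<dots> = net_out T g v + net_out (E - T) (potential_flow r x) v"
      by (intro arg_cong2[where f = "(+)"] net_out_cong) (auto simp: f_def)
    finally show ?thesis
      using g that unfolding c_def by simp
  qed
  then have "is_tree_flow x f"
    unfolding is_tree_flow_def is_bflow_def using T_subset by (auto simp: f_def potential_flow_def)
  then show ?thesis
    by blast
qed

lemma tree_flow_unique:
  assumes "is_tree_flow x f" "is_tree_flow x g"
  shows "f = g"
proof
  fix e
  have "\<forall>v\<in>V. net_out E (\<lambda>e. f e - g e) v = 0" "\<forall>e'\<in>E - T. f e' - g e' = 0"
    using assms unfolding is_tree_flow_def is_bflow_def net_out_diff by simp_all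
  then have "f e - g e = 0" if "e \<in> T"
    using circulation_vanishes_on_tree[of "\<lambda>e. f e - g e"] that by blast
  moreover have "f e = g e" if "e \<notin> T"
    using assms that unfolding is_tree_flow_def by (metis DiffI)
  ultimately show "f e = g e"
    by force
qed

lemma is_tree_flow_tree_flow: "is_tree_flow x (tree_flow V E r b T x)"
proof -
  have "\<exists>!f. is_tree_flow x f"
    using ex_tree_flow tree_flow_unique by blast
  then show ?thesis
    unfolding tree_flow_def is_tree_flow_def[symmetric] by (rule theI')
qed

lemma tree_flow_is_bflow: "is_bflow V E b (tree_flow V E r b T x)"
  using is_tree_flow_tree_flow unfolding is_tree_flow_def by blast

lemma tree_flow_off_tree: "e \<in> E - T \<Longrightarrow> tree_flow V E r b T x e = potential_flow r x e"
  using is_tree_flow_tree_flow[of x] unfolding is_tree_flow_def potential_flow_def by blast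

abbreviation tflow :: "('v \<Rightarrow> real) \<Rightarrow> 'v \<times> 'v \<Rightarrow> real" where
  "tflow \<equiv> tree_flow V E r b T"

lemma energy_tree_flow_minus_Bfun:
  "energy E r (tflow x) - Bfun V E r b x
     = (1/2) * (\<Sum>e\<in>T. r e * (tflow x e - potential_flow r x e)\<^sup>2)"
proof -
  have "(\<Sum>e\<in>E. r e * (tflow x e - potential_flow r x e)\<^sup>2)
      = (\<Sum>e\<in>T. r e * (tflow x e - potential_flow r x e)\<^sup>2)"
    by (rule sum.mono_neutral_right[OF finite_E T_subset]) (simp add: tree_flow_off_tree)
  then show ?thesis
    using energy_minus_Bfun[OF tree_flow_is_bflow] by simp
qed

lemma cut_residual_tree_edge:
  assumes "e \<in> T"
  defines "C \<equiv> treeC T rho e"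
  shows "bset b C - cutflow E r x C
           = (if fst e \<in> C then 1 else -1) * (tflow x e - potential_flow r x e)"
proof -
  have "bset b C = (\<Sum>v\<in>C. net_out E (tflow x) v)"
    unfolding bset_def C_def using tree_flow_is_bflow[of x] treeC_subset[OF assms(1)]
    unfolding is_bflow_def by (auto intro!: sum.cong)
  also have "\<dots> = (\<Sum>e'\<in>cut E C. if fst e' \<in> C then tflow x e' else - tflow x e')"
    unfolding C_def by (rule sum_net_out_eq_cut[OF finite_E finite_treeC[OF assms(1)]])
  finally have bset_cut: "bset b C = \<dots>" .
  have cutflow_cut: "cutflow E r x C
      = (\<Sum>e'\<in>cut E C. if fst e' \<in> C then potential_flow r x e' else - potential_flow r x e')"
    unfolding cutflow_def potential_flow_def by (rule sum.cong) (auto simp: divide_inverse algebra_simps)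
  have "bset b C - cutflow E r x C
      = (\<Sum>e'\<in>cut E C. (if fst e' \<in> C then 1 else -1) * (tflow x e' - potential_flow r x e'))"
    unfolding bset_cut cutflow_cut sum_subtractf[symmetric] by (rule sum.cong) auto
  also have "\<dots> = (if fst e \<in> C then 1 else -1) * (tflow x e - potential_flow r x e)"
    unfolding C_def by (rule sum_cut_treeC[OF assms(1)]) (simp add: tree_flow_off_tree)
  finally show ?thesis .
qed

lemma cut_conductance_ge:
  assumes "e \<in> T"
  shows "(\<Sum>e'\<in>cut E (treeC T rho e). 1 / r e') \<ge> 1 / r e"
  using cut_treeC_Int_T[OF assms] r_pos finite_E
  by (intro member_le_sum) (auto simp: cut_def less_imp_le)

lemma cut_conductance_pos:
  assumes "e \<in> T"
  shows "(\<Sum>e'\<in>cut E (treeC T rho e). 1 / r e') > 0"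
proof -
  have "1 / r e > 0"
    using r_pos assms T_subset by auto
  then show ?thesis
    using cut_conductance_ge[OF assms] by linarith
qed

(* The shift D R(C) = D / s maximises the concave quadratic of Bfun_shift. *)
lemma Bfun_dkosz_step:
  assumes "e \<in> T"
  defines "C \<equiv> treeC T rho e"
  shows "Bfun V E r b (dkosz_step E r b T rho x e) - Bfun V E r b x
           = (1/2) * (bset b C - cutflow E r x C)\<^sup>2 * Rcut E r C"
proof -
  define D where "D = bset b C - cutflow E r x C"
  define s where "s = (\<Sum>e'\<in>cut E C. 1 / r e')"
  have "s > 0"
    using cut_conductance_pos[OF assms(1)] unfolding s_def C_def .
  have "Rcut E r C = 1 / s"
    unfolding Rcut_def s_def ..
  then have step: "dkosz_step E r b T rho x e = (\<lambda>v. x v + (if v \<in> C then D / s else 0))"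
    unfolding dkosz_step_def Let_def D_def C_def by auto
  show ?thesis
    unfolding step Bfun_shift[OF treeC_subset[OF assms(1)], folded C_def] D_def[symmetric] s_def[symmetric]
      \<open>Rcut E r C = 1 / s\<close>
    using \<open>s > 0\<close> by (simp add: field_simps power2_eq_square)
qed

lemma Rcut_treeC_pos:
  assumes "e \<in> T"
  shows "Rcut E r (treeC T rho e) > 0"
  using cut_conductance_pos[OF assms] unfolding Rcut_def by simp

lemma stretch_ge_1:
  assumes "e \<in> T"
  shows "r e / Rcut E r (treeC T rho e) \<ge> 1"
proof -
  define s where "s = (\<Sum>e'\<in>cut E (treeC T rho e). 1 / r e')"
  have "s \<ge> 1 / r e" "r e > 0"
    using cut_conductance_ge[OF assms] r_pos assms T_subset unfolding s_def by auto
  then have "r e * s \<ge> 1"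
    by (simp add: field_simps)
  then show ?thesis
    unfolding Rcut_def s_def[symmetric] by simp
qed

lemma tau_ge_1:
  assumes "T \<noteq> {}"
  shows "tau E r T rho \<ge> 1"
proof -
  obtain e where "e \<in> T"
    using assms by blast
  have "r e / Rcut E r (treeC T rho e) \<le> tau E r T rho"
    unfolding tau_def using \<open>e \<in> T\<close> finite_T stretch_ge_1
    by (intro member_le_sum) (auto intro: order_trans[OF zero_le_one])
  then show ?thesis
    using stretch_ge_1[OF \<open>e \<in> T\<close>] by linarith
qed

lemma prob_edge_nonneg: "T \<noteq> {} \<Longrightarrow> e \<in> T \<Longrightarrow> prob_edge E r T rho e \<ge> 0"
  unfolding prob_edge_def using tau_ge_1 stretch_ge_1[of e] by (intro mult_nonneg_nonneg) auto

lemma sum_prob_edge: "T \<noteq> {} \<Longrightarrow> (\<Sum>e\<in>T. prob_edge E r T rho e) = 1"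
  unfolding prob_edge_def tau_def[symmetric] sum_distrib_left[symmetric]
  using tau_ge_1 unfolding tau_def by simp

lemma expected_Bfun_gain:
  assumes "T \<noteq> {}"
  shows "(\<Sum>e\<in>T. prob_edge E r T rho e * (Bfun V E r b (dkosz_step E r b T rho x e) - Bfun V E r b x))
           = (energy E r (tflow x) - Bfun V E r b x) / tau E r T rho"
proof -
  have "prob_edge E r T rho e * (Bfun V E r b (dkosz_step E r b T rho x e) - Bfun V E r b x)
      = (1/2) * (r e * (tflow x e - potential_flow r x e)\<^sup>2) / tau E r T rho" if "e \<in> T" for e
    unfolding prob_edge_def Bfun_dkosz_step[OF that] cut_residual_tree_edge[OF that] power_mult_distrib
    using Rcut_treeC_pos[OF that] by (simp add: field_simps)
  then show ?thesis
    unfolding energy_tree_flow_minus_Bfun by (simp add: sum_divide_distrib sum_distrib_left)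
qed

lemma dkosz_expect_affine:
  assumes "T \<noteq> {}"
  shows "dkosz_expect E r b T rho k (\<lambda>x. a + c * g x) x0 = a + c * dkosz_expect E r b T rho k g x0"
proof (induction k arbitrary: x0)
  case (Suc k)
  let ?p = "prob_edge E r T rho" and ?s = "dkosz_step E r b T rho x0"
  have "dkosz_expect E r b T rho (Suc k) (\<lambda>x. a + c * g x) x0
      = (\<Sum>e\<in>T. ?p e * (a + c * dkosz_expect E r b T rho k g (?s e)))"
    using Suc by simp
  also have "\<dots> = a * (\<Sum>e\<in>T. ?p e) + c * (\<Sum>e\<in>T. ?p e * dkosz_expect E r b T rho k g (?s e))"
    by (simp add: sum.distrib sum_distrib_left algebra_simps)
  finally show ?case
    using sum_prob_edge[OF assms] by simp
qed simp

lemma dkosz_expect_mono: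
  assumes "T \<noteq> {}" "\<And>x. g x \<le> h x"
  shows "dkosz_expect E r b T rho k g x0 \<le> dkosz_expect E r b T rho k h x0"
proof (induction k arbitrary: x0)
  case (Suc k)
  then show ?case
    using prob_edge_nonneg[OF assms(1)] by (auto intro!: sum_mono mult_left_mono)
qed (simp add: assms(2))

lemma dkosz_expect_contraction:
  assumes "T \<noteq> {}" "q \<ge> 0"
    and contract: "\<And>x. (\<Sum>e\<in>T. prob_edge E r T rho e * \<Phi> (dkosz_step E r b T rho x e)) \<le> q * \<Phi> x"
  shows "dkosz_expect E r b T rho k \<Phi> x0 \<le> q ^ k * \<Phi> x0"
proof (induction k arbitrary: x0)
  case (Suc k)
  have "dkosz_expect E r b T rho (Suc k) \<Phi> x0
      \<le> (\<Sum>e\<in>T. prob_edge E r T rho e * (q ^ k * \<Phi> (dkosz_step E r b T rho x0 e)))"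
    using Suc prob_edge_nonneg[OF assms(1)] by (auto intro!: sum_mono mult_left_mono)
  also have "\<dots> = q ^ k * (\<Sum>e\<in>T. prob_edge E r T rho e * \<Phi> (dkosz_step E r b T rho x0 e))"
    by (simp add: sum_distrib_left algebra_simps)
  also have "\<dots> \<le> q ^ k * (q * \<Phi> x0)"
    using assms(2) contract by (intro mult_left_mono) auto
  finally show ?case
    by (simp add: algebra_simps)
qed simp

lemma expected_gap_contraction:
  assumes "T \<noteq> {}" "\<forall>y. Bfun V E r b y \<le> Bfun V E r b xs"
  shows "(\<Sum>e\<in>T. prob_edge E r T rho e * (Bfun V E r b xs - Bfun V E r b (dkosz_step E r b T rho x e)))
           \<le> (1 - 1 / tau E r T rho) * (Bfun V E r b xs - Bfun V E r b x)"
proof -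
  let ?B = "Bfun V E r b" and ?p = "prob_edge E r T rho"
  have "(\<Sum>e\<in>T. ?p e * (?B xs - ?B (dkosz_step E r b T rho x e)))
      = (\<Sum>e\<in>T. ?p e * (?B xs - ?B x) - ?p e * (?B (dkosz_step E r b T rho x e) - ?B x))"
    by (rule sum.cong) (auto simp: algebra_simps)
  also have "\<dots> = (\<Sum>e\<in>T. ?p e) * (?B xs - ?B x) - (\<Sum>e\<in>T. ?p e * (?B (dkosz_step E r b T rho x e) - ?B x))"
    by (simp add: sum_subtractf sum_distrib_right)
  also have "\<dots> = (?B xs - ?B x) - (energy E r (tflow x) - ?B x) / tau E r T rho"
    unfolding sum_prob_edge[OF assms(1)] expected_Bfun_gain[OF assms(1)] by simp
  also have "\<dots> \<le> (?B xs - ?B x) - (?B xs - ?B x) / tau E r T rho"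
    using Bfun_le_energy[OF tree_flow_is_bflow] tau_ge_1[OF assms(1)]
    by (simp add: divide_right_mono)
  finally show ?thesis
    by (simp add: algebra_simps diff_divide_distrib)
qed

lemma energy_tree_flow_le:
  assumes "T \<noteq> {}" "\<forall>y. Bfun V E r b y \<le> Bfun V E r b xs"
  shows "energy E r (tflow x)
           \<le> Bfun V E r b xs + (tau E r T rho - 1) * (Bfun V E r b xs - Bfun V E r b x)"
proof -
  let ?B = "Bfun V E r b" and ?p = "prob_edge E r T rho"
  have "(energy E r (tflow x) - ?B x) / tau E r T rho
      = (\<Sum>e\<in>T. ?p e * (?B (dkosz_step E r b T rho x e) - ?B x))"
    using expected_Bfun_gain[OF assms(1)] by simp
  also have "\<dots> \<le> (\<Sum>e\<in>T. ?p e * (?B xs - ?B x))"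
    using assms(2) prob_edge_nonneg[OF assms(1)] by (auto intro!: sum_mono mult_left_mono)
  also have "\<dots> = ?B xs - ?B x"
    using sum_prob_edge[OF assms(1)] by (simp add: sum_distrib_right[symmetric])
  finally show ?thesis
    using tau_ge_1[OF assms(1)] by (simp add: field_simps)
qed

lemma expected_gap_le:
  assumes "T \<noteq> {}" "\<forall>y. Bfun V E r b y \<le> Bfun V E r b xs"
  shows "dkosz_expect E r b T rho k (\<lambda>x. Bfun V E r b xs - Bfun V E r b x) x0
           \<le> (1 - 1 / tau E r T rho) ^ k * (Bfun V E r b xs - Bfun V E r b x0)"
  using tau_ge_1[OF assms(1)]
  by (intro dkosz_expect_contraction[OF assms(1) _ expected_gap_contraction[OF assms]])
    (simp add: field_simps)

lemma expected_Lnorm2_error_le: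
  assumes "T \<noteq> {}" "\<forall>y. Bfun V E r b y \<le> Bfun V E r b xs" "(1 - 1 / tau E r T rho) ^ k \<le> \<delta>"
  shows "dkosz_expect E r b T rho k (\<lambda>x. Lnorm2 E r (\<lambda>v. xs v - x v)) (\<lambda>v. 0) \<le> \<delta> * Lnorm2 E r xs"
proof -
  have "Lnorm2 E r (\<lambda>v. xs v - x v) = 0 + 2 * (Bfun V E r b xs - Bfun V E r b x)" for x
    using Bfun_eq_max_minus_Lnorm2[OF assms(2), of x] by (simp add: field_simps)
  then have "dkosz_expect E r b T rho k (\<lambda>x. Lnorm2 E r (\<lambda>v. xs v - x v)) (\<lambda>v. 0)
      = 0 + 2 * dkosz_expect E r b T rho k (\<lambda>x. Bfun V E r b xs - Bfun V E r b x) (\<lambda>v. 0)"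
    unfolding dkosz_expect_affine[OF assms(1), symmetric] by presburger
  also have "\<dots> \<le> 2 * ((1 - 1 / tau E r T rho) ^ k * (Bfun V E r b xs - Bfun V E r b (\<lambda>v. 0)))"
    using expected_gap_le[OF assms(1,2), of k "\<lambda>v. 0"] by linarith
  also have "\<dots> = (1 - 1 / tau E r T rho) ^ k * Lnorm2 E r xs"
    using Bfun_max_eq[OF assms(2)] by (simp add: Bfun_zero)
  also have "\<dots> \<le> \<delta> * Lnorm2 E r xs"
    using assms(3) Lnorm2_nonneg by (rule mult_right_mono)
  finally show ?thesis .
qed

lemma expected_energy_le:
  assumes "T \<noteq> {}" "\<forall>y. Bfun V E r b y \<le> Bfun V E r b xs"
    and "(1 - 1 / tau E r T rho) ^ k \<le> \<epsilon> / tau E r T rho" "\<epsilon> \<ge> 0"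
  shows "dkosz_expect E r b T rho k (\<lambda>x. energy E r (tflow x)) (\<lambda>v. 0) \<le> (1 + \<epsilon>) * Bfun V E r b xs"
proof -
  let ?B = "Bfun V E r b" and ?\<tau> = "tau E r T rho"
  have "?B xs \<ge> 0" "?\<tau> \<ge> 1"
    using Bfun_max_eq[OF assms(2)] Lnorm2_nonneg[of xs] tau_ge_1[OF assms(1)] by simp_all
  have "dkosz_expect E r b T rho k (\<lambda>x. ?B xs - ?B x) (\<lambda>v. 0) \<le> (1 - 1 / ?\<tau>) ^ k * (?B xs - ?B (\<lambda>v. 0))"
    by (rule expected_gap_le[OF assms(1,2)])
  also have "\<dots> \<le> \<epsilon> / ?\<tau> * ?B xs"
    unfolding Bfun_zero diff_zero using assms(3) \<open>?B xs \<ge> 0\<close> by (rule mult_right_mono)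
  finally have gap: "dkosz_expect E r b T rho k (\<lambda>x. ?B xs - ?B x) (\<lambda>v. 0) \<le> \<epsilon> / ?\<tau> * ?B xs" .
  have "dkosz_expect E r b T rho k (\<lambda>x. energy E r (tflow x)) (\<lambda>v. 0)
      \<le> dkosz_expect E r b T rho k (\<lambda>x. ?B xs + (?\<tau> - 1) * (?B xs - ?B x)) (\<lambda>v. 0)"
    using energy_tree_flow_le[OF assms(1,2)] by (rule dkosz_expect_mono[OF assms(1)])
  also have "\<dots> = ?B xs + (?\<tau> - 1) * dkosz_expect E r b T rho k (\<lambda>x. ?B xs - ?B x) (\<lambda>v. 0)"
    by (rule dkosz_expect_affine[OF assms(1)])
  also have "\<dots> \<le> ?B xs + (?\<tau> - 1) * (\<epsilon> / ?\<tau> * ?B xs)"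
    using gap \<open>?\<tau> \<ge> 1\<close> by (intro add_left_mono mult_left_mono) auto
  also have "(?\<tau> - 1) * (\<epsilon> / ?\<tau> * ?B xs) = \<epsilon> * ?B xs - \<epsilon> / ?\<tau> * ?B xs"
    using \<open>?\<tau> \<ge> 1\<close> by (simp add: field_simps)
  also have "?B xs + (\<epsilon> * ?B xs - \<epsilon> / ?\<tau> * ?B xs) \<le> (1 + \<epsilon>) * ?B xs"
    using \<open>?B xs \<ge> 0\<close> \<open>?\<tau> \<ge> 1\<close> assms(4) by (simp add: algebra_simps)
  finally show ?thesis .
qed

end

lemma one_minus_inverse_power_le:
  fixes \<tau> \<epsilon> :: real
  assumes "\<tau> \<ge> 1" "\<epsilon> > 0" "\<tau> * ln (\<tau> / \<epsilon>) \<le> real K"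
  shows "(1 - 1 / \<tau>) ^ K \<le> \<epsilon> / \<tau>"
proof -
  have "(1 - 1 / \<tau>) ^ K \<le> exp (- (1 / \<tau>)) ^ K"
    using assms(1) exp_ge_add_one_self[of "- (1 / \<tau>)"] by (intro power_mono) simp_all
  also have "\<dots> = exp (- real K / \<tau>)"
    by (simp flip: exp_of_nat_mult)
  also have "\<dots> \<le> exp (ln (\<epsilon> / \<tau>))"
    using assms by (simp add: field_simps ln_div)
  also have "\<dots> = \<epsilon> / \<tau>"
    using assms by simp
  finally show ?thesis .
qed

theorem theorem1:
  fixes V :: "'v set" and E T :: "('v \<times> 'v) set" and r :: "'v \<times> 'v \<Rightarrow> real"
    and b xstar :: "'v \<Rightarrow> real" and fstar :: "'v \<times> 'v \<Rightarrow> real"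
    and rho :: 'v and \<epsilon> :: real and K :: nat
  assumes finV: "finite V"
    and EV: "E \<subseteq> V \<times> V"
    and noloop: "\<forall>e\<in>E. fst e \<noteq> snd e"
    and orient: "\<forall>e\<in>E. (snd e, fst e) \<notin> E"
    and conn: "connected_on V E"
    and rpos: "\<forall>e\<in>E. r e > 0"
    and bsum: "(\<Sum>v\<in>V. b v) = 0"
    and tree: "spanning_tree V E T"
    and root: "rho \<in> V"
    and eps: "\<epsilon> > 0"
    and xopt: "\<forall>x. Bfun V E r b x \<le> Bfun V E r b xstar"
    and fflow: "is_bflow V E b fstar"
    and fopt: "\<forall>f. is_bflow V E b f \<longrightarrow> energy E r fstar \<le> energy E r f"
    and K: "K = nat \<lceil>tau E r T rho * ln (tau E r T rho / \<epsilon>)\<rceil>"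
  shows "dkosz_expect E r b T rho K (\<lambda>x. Lnorm2 E r (\<lambda>v. xstar v - x v)) (\<lambda>v. 0)
           \<le> \<epsilon> / tau E r T rho * Lnorm2 E r xstar
       \<and> dkosz_expect E r b T rho K (\<lambda>x. energy E r (tree_flow V E r b T x)) (\<lambda>v. 0)
           \<le> (1 + \<epsilon>) * energy E r fstar"
proof -
  interpret tree_network V E r b T rho
    using finV EV rpos bsum tree by unfold_locales
  show ?thesis
  proof (cases "T = {}")
    case True
    then have "E = {}" "K = 0"
      using tree_empty_imp_loop noloop K unfolding tau_def by auto
    then show ?thesis
      by (simp add: Lnorm2_def energy_def)
  next
    case False
    have rate: "(1 - 1 / tau E r T rho) ^ K \<le> \<epsilon> / tau E r T rho"
      using tau_ge_1[OF False] eps unfolding K by (intro one_minus_inverse_power_le real_nat_ceiling_ge)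
    have "dkosz_expect E r b T rho K (\<lambda>x. energy E r (tree_flow V E r b T x)) (\<lambda>v. 0)
        \<le> (1 + \<epsilon>) * Bfun V E r b xstar"
      using eps by (intro expected_energy_le[OF False xopt rate]) simp
    also have "\<dots> \<le> (1 + \<epsilon>) * energy E r fstar"
      using Bfun_le_energy[OF fflow] eps by (intro mult_left_mono) auto
    finally show ?thesis
      using expected_Lnorm2_error_le[OF False xopt rate] by blast
  qed
qed

end
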